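(* Let $m,K\ge1$ be integers, $q\in[1,\infty]$, $a_0\ge 0$, $a,b,C_0,M>0$, $L,L_K\ge0$, and let $\bar\Gamma=\{(x,Y):x\in[a_0,a_0+a],\ Y\in\mathbb{R}^m,\ |Y|_2\le b+C_0\}$ and $\mathbb B_q(1)=\{\theta\in\mathbb{R}^K:|\theta|_q\le1\}$. Let $f(x,Y;\theta)$ be defined for $(x,Y)\in\bar\Gamma$, $\theta\in\mathbb B_q(1)$, such that for each $\theta$, $f(\cdot,\cdot;\theta)$ is continuous on $\bar\Gamma$ with $\max_{\bar\Gamma}|f(x,Y;\theta)|\le M$, and $$|f(x,Y;\theta)-f(x,\tilde Y;\theta)|\le L|Y-\tilde Y|_2,\qquad |f(x,Y;\theta)-f(x,Y;\theta')|\le L_K|\theta-\theta'|_q$$ for all $(x,Y),(x,\tilde Y)\in\bar\Gamma$ and $\theta,\theta'\in\mathbb B_q(1)$. Let $\alpha=\min\{a,b/M\}$ and assume that for every $\theta\in\mathbb B_q(1)$ and every initial vector $Y_0\in\mathbb{R}^m$ with $|Y_0|_2\le C_0$, the ODE $y^{(m)}(x)=f(x,Y(x);\theta)$, $Y(a_0)=Y_0$, where $Y(x)=(y(x),\dots,y^{(m-1)}(x))$, has a solution on $[a_0,a_0+\alpha]$ with $(x,Y(x))\in\bar\Gamma$. Let $\mathcal Y$ be the class of these solutions on $[a_0,a_0+\alpha]$ as $\theta$ ranges over $\mathbb B_q(1)$ and $Y_0$ over $\{|Y_0|_2\le C_0\}$, and let $$L_{\max}=\sup_{x\in[a_0,a_0+\alpha]}\Big\{\exp\big(x\sqrt{L^2+1}\big)\Big[1+\int_0^x\exp\big(-s\sqrt{L^2+1}\big)ds\Big]\Big\}.$$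 Then for every $\delta>0$, $$\log N_\infty(\delta,\mathcal Y)\le K\log\Big(1+\frac{2L_{\max}L_K}{\delta}\Big)+m\log\Big(\frac{2C_0L_{\max}}{\delta}+1\Big).$$
   Context: $N_\infty(\delta,\mathcal Y)$ is the smallest cardinality of a subset $\{y^1,\dots,y^N\}\subset\mathcal Y$ such that every $y\in\mathcal Y$ satisfies $\sup_{x\in[a_0,a_0+\alpha]}|y(x)-y^i(x)|\le\delta$ for some $i$. $|\theta|_q$ is the $\ell_q$ norm. *)

theory Defs
  imports "HOL-Analysis.Analysis"
begin

text \<open>Vectors in R^n are represented as functions nat => real, vanishing
  from index n onwards.\<close>

definition is_vec :: "nat \<Rightarrow> (nat \<Rightarrow> real) \<Rightarrow> bool" where
  "is_vec n v \<longleftrightarrow> (\<forall>i\<ge>n. v i = 0)"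

definition norm2 :: "nat \<Rightarrow> (nat \<Rightarrow> real) \<Rightarrow> real" where
  "norm2 n v = sqrt (\<Sum>i<n. (v i)\<^sup>2)"

definition lq_norm :: "ereal \<Rightarrow> nat \<Rightarrow> (nat \<Rightarrow> real) \<Rightarrow> real" where
  "lq_norm q n v =
     (if q = \<infinity> then (if n = 0 then 0 else Max ((\<lambda>i. \<bar>v i\<bar>) ` {..<n}))
      else (\<Sum>i<n. \<bar>v i\<bar> powr real_of_ereal q) powr (1 / real_of_ereal q))"

definition lq_ball :: "ereal \<Rightarrow> nat \<Rightarrow> (nat \<Rightarrow> real) set" where
  "lq_ball q K = {\<theta>. is_vec K \<theta> \<and> lq_norm q K \<theta> \<le> 1}"

definition Gamma :: "nat \<Rightarrow> real \<Rightarrow> real \<Rightarrow> real \<Rightarrow> real \<Rightarrow> (real \<times> (nat \<Rightarrow> real)) set" where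
  "Gamma m a0 a b C0 = {(x, Y). x \<in> {a0..a0 + a} \<and> is_vec m Y \<and> norm2 m Y \<le> b + C0}"

definition cont_on_Gamma :: "nat \<Rightarrow> (real \<times> (nat \<Rightarrow> real)) set \<Rightarrow> (real \<Rightarrow> (nat \<Rightarrow> real) \<Rightarrow> real) \<Rightarrow> bool" where
  "cont_on_Gamma m G g \<longleftrightarrow>
     (\<forall>(x, Y)\<in>G. \<forall>\<epsilon>>0. \<exists>d>0. \<forall>(x', Y')\<in>G.
        sqrt ((x - x')\<^sup>2 + (norm2 m (\<lambda>i. Y i - Y' i))\<^sup>2) < d \<longrightarrow> \<bar>g x Y - g x' Y'\<bar> < \<epsilon>)"

text \<open>y solves y^(m) = f(x, Y(x); theta), Y(a0) = Y0 on [a0, a0+alpha], with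
  (x, Y(x)) in G; Ys j is the j-th derivative of y.\<close>
definition is_solution ::
  "nat \<Rightarrow> (real \<Rightarrow> (nat \<Rightarrow> real) \<Rightarrow> (nat \<Rightarrow> real) \<Rightarrow> real) \<Rightarrow> (real \<times> (nat \<Rightarrow> real)) set \<Rightarrow>
   (nat \<Rightarrow> real) \<Rightarrow> (nat \<Rightarrow> real) \<Rightarrow> real \<Rightarrow> real \<Rightarrow> (real \<Rightarrow> real) \<Rightarrow> bool" where
  "is_solution m f G \<theta> Y0 a0 \<alpha> y \<longleftrightarrow>
     (\<exists>Ys :: nat \<Rightarrow> real \<Rightarrow> real.
        let I = {a0..a0 + \<alpha>}; St = (\<lambda>x j. if j < m then Ys j x else 0) in
        (\<forall>x\<in>I. Ys 0 x = y x) \<and>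
        (\<forall>x\<in>I. \<forall>j. Suc j < m \<longrightarrow> (Ys j has_real_derivative Ys (Suc j) x) (at x within I)) \<and>
        (\<forall>x\<in>I. (Ys (m - 1) has_real_derivative f x (St x) \<theta>) (at x within I)) \<and>
        St a0 = Y0 \<and>
        (\<forall>x\<in>I. (x, St x) \<in> G))"

text \<open>N_infinity(delta, Ys): smallest cardinality of a finite delta-cover in sup norm
  over I by elements of the class (infinity if no finite cover exists).\<close>
definition covering_number :: "real \<Rightarrow> real set \<Rightarrow> (real \<Rightarrow> real) set \<Rightarrow> enat" where
  "covering_number \<delta> I \<Y> = Inf {enat (card C) | C. finite C \<and> C \<subseteq> \<Y> \<and>
       (\<forall>y\<in>\<Y>. \<exists>c\<in>C. \<forall>x\<in>I. \<bar>y x - c x\<bar> \<le> \<delta>)}"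

end

theory Submission
  imports Defs
begin

(* Written as a first-order system for the state vector (y, y', ..., y^(m-1)), the difference E of
   two solutions satisfies |E'| <= sqrt (L^2 + 1) |E| + LK |theta - theta'|_q, so a Gronwall argument
   bounds |y - y'| on [a0, a0 + alpha] by Lmax * max (|Y0 - Y0'|_2, LK |theta - theta'|_q).
   Hence delta/Lmax-nets of the parameter ball and of the ball of initial values yield a delta-net of
   the solution class, and the volumetric bound (1 + 2R/eps)^n for eps-nets of a ball of radius R
   of any norm on R^n gives the estimate. *)

lemma convex_on_powr_nonneg:
  assumes "1 \<le> p"
  shows "convex_on {0..} (\<lambda>x::real. x powr p)"
proof
  fix t u w :: real
  assume t: "0 < t" "t < 1" and uw: "u \<in> {0..}" "w \<in> {0..}"
  have sub: "s powr p \<le> s" if "0 \<le> s" "s \<le> 1" for s :: real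
    using powr_mono'[OF assms that] that by simp
  consider "0 < u" "0 < w" | "u = 0" | "w = 0" using uw by fastforce
  then show "((1 - t) *\<^sub>R u + t *\<^sub>R w) powr p \<le> (1 - t) * u powr p + t * w powr p"
  proof cases
    case 1
    then show ?thesis using convex_onD[OF powr_convex[OF assms], of t u w] t by auto
  next
    case 2
    have "(t * w) powr p \<le> t * w powr p"
      using sub[of t] t uw by (auto simp: powr_mult intro: mult_right_mono)
    then show ?thesis using 2 by simp
  next
    case 3
    have "((1 - t) * u) powr p \<le> (1 - t) * u powr p"
      using sub[of "1 - t"] t uw by (auto simp: powr_mult intro: mult_right_mono)
    then show ?thesis using 3 by simp
  qed
qed (simp add: convex_real_interval)

lemma abs_add_powr_le_convex:
  fixes u v a b p :: real
  assumes p: "1 \<le> p" and ab: "0 < a" "0 < b"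
  shows "\<bar>u + v\<bar> powr p
           \<le> (a + b) powr p * (a / (a + b) * (\<bar>u\<bar> / a) powr p + b / (a + b) * (\<bar>v\<bar> / b) powr p)"
proof -
  define l where "l = a / (a + b)"
  have l: "0 \<le> l" "l \<le> 1" "1 - l = b / (a + b)" using ab by (auto simp: l_def field_simps)
  have "(1 - l) * (\<bar>v\<bar> / b) = \<bar>v\<bar> / (a + b)" "l * (\<bar>u\<bar> / a) = \<bar>u\<bar> / (a + b)"
    using ab unfolding l(3) by (simp_all add: l_def)
  then have split: "\<bar>u\<bar> + \<bar>v\<bar> = (a + b) * ((1 - l) * (\<bar>v\<bar> / b) + l * (\<bar>u\<bar> / a))"
    using ab by (simp add: add_divide_distrib[symmetric])
  have "\<bar>u + v\<bar> powr p \<le> (\<bar>u\<bar> + \<bar>v\<bar>) powr p"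
    using p by (intro powr_mono2) auto
  also have "\<dots> = (a + b) powr p * ((1 - l) * (\<bar>v\<bar> / b) + l * (\<bar>u\<bar> / a)) powr p"
    unfolding split using ab l by (simp add: powr_mult)
  also have "((1 - l) * (\<bar>v\<bar> / b) + l * (\<bar>u\<bar> / a)) powr p
               \<le> (1 - l) * (\<bar>v\<bar> / b) powr p + l * (\<bar>u\<bar> / a) powr p"
    using convex_onD[OF convex_on_powr_nonneg[OF p], of l "\<bar>v\<bar> / b" "\<bar>u\<bar> / a"] ab l by simp
  finally show ?thesis
    using ab by (simp add: l(3) flip: l_def add.commute)
qed

lemma minkowski_powr_sum:
  fixes x y :: "'a \<Rightarrow> real"
  assumes p: "1 \<le> p" and I: "finite I"
  shows "(\<Sum>i\<in>I. \<bar>x i + y i\<bar> powr p) powr (1 / p)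
           \<le> (\<Sum>i\<in>I. \<bar>x i\<bar> powr p) powr (1 / p) + (\<Sum>i\<in>I. \<bar>y i\<bar> powr p) powr (1 / p)"
    (is "?S (\<lambda>i. x i + y i) \<le> ?S x + ?S y")
proof -
  have zero: "?S v = 0 \<longleftrightarrow> (\<forall>i\<in>I. v i = 0)" for v
    using p I by (simp add: sum_nonneg_eq_0_iff)
  consider "?S x = 0" | "?S y = 0" | "0 < ?S x" "0 < ?S y"
    by (metis less_eq_real_def powr_ge_zero)
  then show ?thesis
  proof cases
    case 1
    then show ?thesis using zero[of x] by (simp cong: sum.cong)
  next
    case 2
    then show ?thesis using zero[of y] by (simp cong: sum.cong)
  next
    case 3
    define a b where "a = ?S x" and "b = ?S y"
    have ab: "0 < a" "0 < b" using 3 by (simp_all add: a_def b_def)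
    have unit: "(\<Sum>i\<in>I. (\<bar>v i\<bar> / ?S v) powr p) = 1" if "0 < ?S v" for v
      using p that by (simp add: powr_divide powr_powr sum_nonneg flip: sum_divide_distrib)
    have "(\<Sum>i\<in>I. \<bar>x i + y i\<bar> powr p)
            \<le> (\<Sum>i\<in>I. (a + b) powr p * (a / (a + b) * (\<bar>x i\<bar> / a) powr p + b / (a + b) * (\<bar>y i\<bar> / b) powr p))"
      using p ab by (intro sum_mono abs_add_powr_le_convex)
    also have "\<dots> = (a + b) powr p *
        (a / (a + b) * (\<Sum>i\<in>I. (\<bar>x i\<bar> / a) powr p) + b / (a + b) * (\<Sum>i\<in>I. (\<bar>y i\<bar> / b) powr p))"
      by (simp add: sum.distrib sum_distrib_left distrib_left mult.assoc)
    also have "\<dots> = (a + b) powr p"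
      using unit[of x] unit[of y] 3 ab by (simp add: flip: a_def b_def add_divide_distrib)
    finally have "?S (\<lambda>i. x i + y i) \<le> ((a + b) powr p) powr (1 / p)"
      using p by (intro powr_mono2) (auto simp: sum_nonneg)
    then show ?thesis using ab p by (simp add: powr_powr a_def b_def)
  qed
qed

lemma real_of_ereal_ge_one: "1 \<le> q \<Longrightarrow> q \<noteq> \<infinity> \<Longrightarrow> 1 \<le> real_of_ereal q"
  by (cases q) auto

lemma lq_norm_cong: "(\<And>i. i < n \<Longrightarrow> x i = y i) \<Longrightarrow> lq_norm q n x = lq_norm q n y"
  unfolding lq_norm_def by (auto intro!: sum.cong image_cong)

lemma lq_norm_infinity_le:
  "0 \<le> r \<Longrightarrow> (\<And>i. i < n \<Longrightarrow> \<bar>x i\<bar> \<le> r) \<Longrightarrow> lq_norm \<infinity> n x \<le> r"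
  by (auto simp: lq_norm_def Max_le_iff lessThan_empty_iff finite_imageI)

lemma lq_norm_nonneg: "0 \<le> lq_norm q n x"
  by (auto simp: lq_norm_def Max_ge_iff lessThan_empty_iff finite_imageI)

lemma abs_le_lq_norm:
  assumes "1 \<le> q" "i < n"
  shows "\<bar>x i\<bar> \<le> lq_norm q n x"
proof (cases "q = \<infinity>")
  case False
  define p where "p = real_of_ereal q"
  have p: "1 \<le> p" using real_of_ereal_ge_one[OF assms(1) False] by (simp add: p_def)
  have "(\<bar>x i\<bar> powr p) powr (1 / p) \<le> (\<Sum>i<n. \<bar>x i\<bar> powr p) powr (1 / p)"
    using p assms(2) by (intro powr_mono2 member_le_sum) auto
  then show ?thesis using p False by (simp add: lq_norm_def p_def powr_powr)
qed (use assms in \<open>auto simp: lq_norm_def\<close>)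

lemma lq_norm_scale:
  assumes "1 \<le> q"
  shows "lq_norm q n (\<lambda>i. c * x i) = \<bar>c\<bar> * lq_norm q n x"
proof (cases "q = \<infinity>")
  case True
  have "Max ((\<lambda>i. \<bar>c * x i\<bar>) ` {..<n}) = \<bar>c\<bar> * Max ((\<lambda>i. \<bar>x i\<bar>) ` {..<n})" if "n \<noteq> 0"
    using that mono_Max_commute[of "\<lambda>y. \<bar>c\<bar> * y" "(\<lambda>i. \<bar>x i\<bar>) ` {..<n}"]
    by (auto simp: mono_def mult_left_mono image_image abs_mult lessThan_empty_iff finite_imageI)
  then show ?thesis using True by (simp add: lq_norm_def)
next
  case False
  define p where "p = real_of_ereal q"
  have p: "1 \<le> p" using real_of_ereal_ge_one[OF assms False] by (simp add: p_def)
  have "(\<Sum>i<n. \<bar>c * x i\<bar> powr p) powr (1 / p) = (\<bar>c\<bar> powr p * (\<Sum>i<n. \<bar>x i\<bar> powr p)) powr (1 / p)"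
    by (simp add: abs_mult powr_mult sum_distrib_left)
  also have "\<dots> = \<bar>c\<bar> * (\<Sum>i<n. \<bar>x i\<bar> powr p) powr (1 / p)"
    using p by (simp add: powr_mult powr_powr)
  finally show ?thesis using False by (simp add: lq_norm_def p_def)
qed

lemma lq_norm_triangle:
  assumes "1 \<le> q"
  shows "lq_norm q n (\<lambda>i. x i + y i) \<le> lq_norm q n x + lq_norm q n y"
proof (cases "q = \<infinity>")
  case True
  have "\<bar>x i + y i\<bar> \<le> lq_norm q n x + lq_norm q n y" if "i < n" for i
    using abs_le_lq_norm[OF assms that, of x] abs_le_lq_norm[OF assms that, of y] by linarith
  then show ?thesis using True by (simp add: lq_norm_infinity_le add_nonneg_nonneg lq_norm_nonneg)
next
  case False
  then show ?thesis
    using minkowski_powr_sum[OF real_of_ereal_ge_one[OF assms False] finite_lessThan]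
    by (simp add: lq_norm_def)
qed

lemma lq_norm_le_one:
  assumes "1 \<le> q" and small: "\<And>i. i < n \<Longrightarrow> \<bar>x i\<bar> \<le> 1 / real n"
  shows "lq_norm q n x \<le> 1"
proof (cases "q = \<infinity>")
  case True
  have "\<bar>x i\<bar> \<le> 1" if "i < n" for i
    using small[OF that] that by (simp add: divide_le_eq_1 order_trans)
  then show ?thesis using True by (simp add: lq_norm_infinity_le)
next
  case False
  define p where "p = real_of_ereal q"
  have p: "1 \<le> p" using real_of_ereal_ge_one[OF assms(1) False] by (simp add: p_def)
  have "\<bar>x i\<bar> powr p \<le> 1 / real n" if "i < n" for i
  proof -
    have "\<bar>x i\<bar> \<le> 1" using small[OF that] that by (simp add: divide_le_eq_1 order_trans)
    then have "\<bar>x i\<bar> powr p \<le> \<bar>x i\<bar>" using powr_mono'[OF p, of "\<bar>x i\<bar>"] by simp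
    then show ?thesis using small[OF that] by linarith
  qed
  then have "(\<Sum>i<n. \<bar>x i\<bar> powr p) \<le> 1"
    using sum_mono[of "{..<n}" "\<lambda>i. \<bar>x i\<bar> powr p" "\<lambda>_. 1 / real n"]
    by (simp split: if_splits)
  then have "(\<Sum>i<n. \<bar>x i\<bar> powr p) powr (1 / p) \<le> 1"
    using p powr_mono2[of "1 / p" "\<Sum>i<n. \<bar>x i\<bar> powr p" 1] by (simp add: sum_nonneg)
  then show ?thesis using False by (simp add: lq_norm_def p_def)
qed

abbreviation lborel_vec :: "nat \<Rightarrow> (nat \<Rightarrow> real) measure" where
  "lborel_vec n \<equiv> PiM {..<n} (\<lambda>_. lborel)"

lemma lq_norm_measurable: "lq_norm q n \<in> borel_measurable (lborel_vec n)"
  unfolding lq_norm_def by measurable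

lemma norm2_eq_lq_norm: "norm2 n v = lq_norm 2 n v"
  by (simp add: norm2_def lq_norm_def powr_half_sqrt sum_nonneg)

lemma emeasure_lborel_affine_preimage:
  fixes c t :: real
  assumes c: "0 < c" and B: "B \<in> sets borel"
  shows "emeasure lborel {y. (y - t) / c \<in> B} = ennreal c * emeasure lborel B"
proof -
  have [measurable]: "B \<in> sets borel" by (fact B)
  have pre: "(\<lambda>x. t + c * x) -` {y. (y - t) / c \<in> B} \<inter> space lborel = B"
    using c by auto
  have "emeasure lborel {y. (y - t) / c \<in> B}
          = emeasure (density (distr lborel borel (\<lambda>x. t + c * x)) (\<lambda>_. ennreal c))
              {y. (y - t) / c \<in> B}"
    using lborel_real_affine[of c t] c by simp
  also have "\<dots> = ennreal c * emeasure lborel B"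
    using c by (simp add: emeasure_density_const emeasure_distr pre)
  finally show ?thesis .
qed

lemma emeasure_lborel_vec_affine_preimage:
  fixes c :: real and t :: "nat \<Rightarrow> real"
  assumes c: "0 < c" and A: "A \<in> sets (lborel_vec n)"
  shows "emeasure (lborel_vec n) ((\<lambda>x. \<lambda>i\<in>{..<n}. (x i - t i) / c) -` A \<inter> space (lborel_vec n))
           = ennreal (c ^ n) * emeasure (lborel_vec n) A"
proof -
  interpret product_sigma_finite "\<lambda>_. lborel :: real measure" by standard
  define T where "T = (\<lambda>x::nat \<Rightarrow> real. \<lambda>i\<in>{..<n}. (x i - t i) / c)"
  have T: "T \<in> lborel_vec n \<rightarrow>\<^sub>M lborel_vec n" unfolding T_def by measurable
  have eq: "lborel_vec n =
      density (distr (lborel_vec n) (lborel_vec n) T) (\<lambda>_. ennreal (1 / c ^ n))"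
  proof (rule PiM_eqI[symmetric])
    fix B :: "nat \<Rightarrow> real set" assume B: "\<And>i. i \<in> {..<n} \<Longrightarrow> B i \<in> sets lborel"
    have [measurable]: "Pi\<^sub>E {..<n} B \<in> sets (lborel_vec n)"
      using B by (intro sets_PiM_I_finite) auto
    have pre: "T -` Pi\<^sub>E {..<n} B \<inter> space (lborel_vec n)
                 = Pi\<^sub>E {..<n} (\<lambda>i. {y. (y - t i) / c \<in> B i})"
      by (auto simp: T_def space_PiM PiE_def Pi_def extensional_def)
    have Bi: "{y. (y - t i) / c \<in> B i} \<in> sets lborel" if "i \<in> {..<n}" for i
      using B[OF that] by (simp add: measurable_sets_borel[of "\<lambda>y. (y - t i) / c"] vimage_def)
    have "emeasure (distr (lborel_vec n) (lborel_vec n) T) (Pi\<^sub>E {..<n} B)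
            = (\<Prod>i<n. emeasure lborel {y. (y - t i) / c \<in> B i})"
      using T Bi by (simp add: emeasure_distr pre, intro emeasure_PiM) auto
    also have "\<dots> = ennreal (c ^ n) * (\<Prod>i<n. emeasure lborel (B i))"
      using B c by (simp add: emeasure_lborel_affine_preimage prod.distrib ennreal_power)
    moreover have "ennreal (1 / c ^ n) * ennreal (c ^ n) = 1"
      using c by (simp flip: ennreal_mult)
    ultimately show "emeasure (density (distr (lborel_vec n) (lborel_vec n) T) (\<lambda>_. ennreal (1 / c ^ n)))
                      (Pi\<^sub>E {..<n} B)
                    = (\<Prod>i\<in>{..<n}. emeasure lborel (B i))"
      by (simp add: emeasure_density_const mult.assoc[symmetric])
  qed simp_all
  have "emeasure (lborel_vec n) A
          = ennreal (1 / c ^ n) * emeasure (lborel_vec n) (T -` A \<inter> space (lborel_vec n))"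
    using A T by (subst eq) (simp add: emeasure_density_const emeasure_distr)
  moreover have "ennreal (c ^ n) * ennreal (1 / c ^ n) = 1"
    using c by (simp flip: ennreal_mult)
  ultimately show ?thesis
    by (simp add: T_def mult.assoc[symmetric])
qed

lemma emeasure_lborel_vec_cube:
  assumes "0 \<le> a"
  shows "emeasure (lborel_vec n) (Pi\<^sub>E {..<n} (\<lambda>_. {-a..a})) = ennreal ((2 * a) ^ n)"
proof -
  interpret product_sigma_finite "\<lambda>_. lborel :: real measure" by standard
  show ?thesis using assms by (simp add: emeasure_PiM ennreal_power)
qed

(* Vectors are functions nat => real of which only the first n coordinates matter. The last
   assumptions sandwich the unit ball between two cubes, which is all the volume argument needs. *)
locale coordinate_norm =
  fixes n :: nat and N :: "(nat \<Rightarrow> real) \<Rightarrow> real"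
  assumes cong: "(\<And>i. i < n \<Longrightarrow> x i = y i) \<Longrightarrow> N x = N y"
    and scale: "N (\<lambda>i. c * x i) = \<bar>c\<bar> * N x"
    and triangle: "N (\<lambda>i. x i + y i) \<le> N x + N y"
    and abs_le: "i < n \<Longrightarrow> \<bar>x i\<bar> \<le> N x"
    and le_one: "(\<And>i. i < n \<Longrightarrow> \<bar>x i\<bar> \<le> 1 / real n) \<Longrightarrow> N x \<le> 1"
    and borel_measurable: "N \<in> borel_measurable (lborel_vec n)"
begin

lemma zero: "N (\<lambda>_. 0) = 0"
  using scale[of 0] by simp

lemma minus_commute: "N (\<lambda>i. x i - y i) = N (\<lambda>i. y i - x i)"
  using scale[of "-1" "\<lambda>i. x i - y i"] by simp

definition norm_ball :: "(nat \<Rightarrow> real) \<Rightarrow> real \<Rightarrow> (nat \<Rightarrow> real) set" where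
  "norm_ball s r = {x \<in> space (lborel_vec n). N (\<lambda>i. x i - s i) \<le> r}"

lemma sets_norm_ball: "norm_ball s r \<in> sets (lborel_vec n)"
proof -
  have "(\<lambda>x. \<lambda>i\<in>{..<n}. x i - s i) \<in> lborel_vec n \<rightarrow>\<^sub>M lborel_vec n" by measurable
  from measurable_comp[OF this borel_measurable]
  have "(\<lambda>x. N (\<lambda>i. x i - s i)) \<in> borel_measurable (lborel_vec n)"
    by (simp add: o_def cong[of "restrict _ {..<n}"])
  then show ?thesis
    unfolding norm_ball_def by measurable
qed

lemma emeasure_norm_ball:
  assumes r: "0 < r"
  shows "emeasure (lborel_vec n) (norm_ball s r)
           = ennreal (r ^ n) * emeasure (lborel_vec n) (norm_ball (\<lambda>_. 0) 1)"
proof -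
  have "N (\<lambda>i. (x i - s i) / r) = N (\<lambda>i. x i - s i) / r" for x
    using r scale[of "1 / r" "\<lambda>i. x i - s i"] by simp
  then have "norm_ball s r
      = (\<lambda>x. \<lambda>i\<in>{..<n}. (x i - s i) / r) -` norm_ball (\<lambda>_. 0) 1 \<inter> space (lborel_vec n)"
    using r by (auto simp: norm_ball_def space_PiM cong[of "restrict _ {..<n}"] divide_le_eq_1)
  then show ?thesis
    using emeasure_lborel_vec_affine_preimage[OF r sets_norm_ball] by simp
qed

lemma emeasure_unit_norm_ball_pos: "0 < emeasure (lborel_vec n) (norm_ball (\<lambda>_. 0) 1)"
proof -
  have "Pi\<^sub>E {..<n} (\<lambda>_. {- 1 / real n .. 1 / real n}) \<subseteq> norm_ball (\<lambda>_. 0) 1"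
    by (auto simp: norm_ball_def space_PiM PiE_def Pi_def abs_le_iff intro!: le_one)
  from emeasure_mono[OF this sets_norm_ball]
  have "ennreal ((2 / real n) ^ n) \<le> emeasure (lborel_vec n) (norm_ball (\<lambda>_. 0) 1)"
    using emeasure_lborel_vec_cube[of "1 / real n" n] by simp
  moreover have "0 < ennreal ((2 / real n) ^ n)"
    by (cases n) auto
  ultimately show ?thesis by (rule less_le_trans[rotated])
qed

lemma emeasure_unit_norm_ball_finite: "emeasure (lborel_vec n) (norm_ball (\<lambda>_. 0) 1) < \<infinity>"
proof -
  have "norm_ball (\<lambda>_. 0) 1 \<subseteq> Pi\<^sub>E {..<n} (\<lambda>_. {-1..1})"
  proof
    fix x assume "x \<in> norm_ball (\<lambda>_. 0) 1"
    then have "x \<in> space (lborel_vec n)" and "\<And>i. i < n \<Longrightarrow> \<bar>x i\<bar> \<le> 1"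
      using abs_le[of _ x] by (auto simp: norm_ball_def intro: order_trans)
    then show "x \<in> Pi\<^sub>E {..<n} (\<lambda>_. {-1..1})"
      by (auto simp: space_PiM PiE_def Pi_def abs_le_iff)
  qed
  moreover have "Pi\<^sub>E {..<n} (\<lambda>_. {-1..1::real}) \<in> sets (lborel_vec n)"
    by (intro sets_PiM_I_finite) auto
  ultimately have "emeasure (lborel_vec n) (norm_ball (\<lambda>_. 0) 1)
                     \<le> emeasure (lborel_vec n) (Pi\<^sub>E {..<n} (\<lambda>_. {-1..1}))"
    by (rule emeasure_mono)
  also have "\<dots> < \<infinity>"
    by (simp add: emeasure_lborel_vec_cube)
  finally show ?thesis .
qed

lemma disjoint_family_on_norm_ball:
  assumes sep: "\<forall>s\<in>S. \<forall>t\<in>S. s \<noteq> t \<longrightarrow> 2 * r < N (\<lambda>i. s i - t i)"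
  shows "disjoint_family_on (\<lambda>s. norm_ball s r) S"
  unfolding disjoint_family_on_def
proof (intro ballI impI, rule ccontr)
  fix s t assume st: "s \<in> S" "t \<in> S" "s \<noteq> t" "norm_ball s r \<inter> norm_ball t r \<noteq> {}"
  then obtain x where "N (\<lambda>i. x i - s i) \<le> r" "N (\<lambda>i. x i - t i) \<le> r"
    by (auto simp: norm_ball_def)
  moreover have "N (\<lambda>i. s i - t i) \<le> N (\<lambda>i. s i - x i) + N (\<lambda>i. x i - t i)"
    using triangle[of "\<lambda>i. s i - x i" "\<lambda>i. x i - t i"] by simp
  ultimately show False
    using sep st minus_commute[of s x] by force
qed

lemma UN_norm_ball_subset:
  assumes "\<forall>s\<in>S. N s \<le> R"
  shows "(\<Union>s\<in>S. norm_ball s r) \<subseteq> norm_ball (\<lambda>_. 0) (R + r)"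
proof safe
  fix x s assume x: "s \<in> S" "x \<in> norm_ball s r"
  have "N x \<le> N (\<lambda>i. x i - s i) + N s"
    using triangle[of "\<lambda>i. x i - s i" s] by simp
  then show "x \<in> norm_ball (\<lambda>_. 0) (R + r)"
    using x assms by (auto simp: norm_ball_def)
qed

(* The balls of radius eps/2 around the points of S are disjoint and lie in the ball of radius
   R + eps/2; compare volumes. *)
lemma card_separated_le:
  assumes eps: "0 < \<epsilon>" and R: "0 \<le> R" and S: "finite S" "\<forall>s\<in>S. N s \<le> R"
    and sep: "\<forall>s\<in>S. \<forall>t\<in>S. s \<noteq> t \<longrightarrow> \<epsilon> < N (\<lambda>i. s i - t i)"
  shows "real (card S) \<le> (1 + 2 * R / \<epsilon>) ^ n"
proof -
  define r where "r = \<epsilon> / 2"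
  have r: "0 < r" using eps by (simp add: r_def)
  obtain v where v: "emeasure (lborel_vec n) (norm_ball (\<lambda>_. 0) 1) = ennreal v" "0 < v"
    using emeasure_unit_norm_ball_pos emeasure_unit_norm_ball_finite
    by (metis ennreal_cases ennreal_less_zero_iff infinity_ennreal_def less_irrefl)
  have "emeasure (lborel_vec n) (\<Union>s\<in>S. norm_ball s r)
          \<le> emeasure (lborel_vec n) (norm_ball (\<lambda>_. 0) (R + r))"
    by (rule emeasure_mono[OF UN_norm_ball_subset[OF S(2)] sets_norm_ball])
  moreover have "emeasure (lborel_vec n) (\<Union>s\<in>S. norm_ball s r)
                   = (\<Sum>s\<in>S. emeasure (lborel_vec n) (norm_ball s r))"
    using sets_norm_ball disjoint_family_on_norm_ball[of S r] sep S(1)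
    by (intro sum_emeasure[symmetric]) (auto simp: r_def)
  moreover have "emeasure (lborel_vec n) (norm_ball s r') = ennreal (r' ^ n * v)"
    if "0 < r'" for s r'
    using emeasure_norm_ball[OF that] ennreal_mult[of "r' ^ n" v] that v by simp
  ultimately have "of_nat (card S) * ennreal (r ^ n * v) \<le> ennreal ((R + r) ^ n * v)"
    using r R by simp
  then have "ennreal (real (card S) * (r ^ n * v)) \<le> ennreal ((R + r) ^ n * v)"
    using r v by (simp add: ennreal_of_nat_eq_real_of_nat ennreal_mult)
  then have "real (card S) * r ^ n \<le> (R + r) ^ n"
    using r R v by (simp add: ennreal_le_iff)
  then have "real (card S) \<le> ((R + r) / r) ^ n"
    using r by (simp add: power_divide field_simps)
  also have "(R + r) / r = 1 + 2 * R / \<epsilon>"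
    using eps by (simp add: r_def field_simps)
  finally show ?thesis .
qed

lemma finite_cover:
  assumes eps: "0 < \<epsilon>" and R: "0 \<le> R" and A: "\<forall>v\<in>A. N v \<le> R"
  shows "\<exists>C. finite C \<and> C \<subseteq> A \<and> real (card C) \<le> (1 + 2 * R / \<epsilon>) ^ n \<and>
             (\<forall>v\<in>A. \<exists>c\<in>C. N (\<lambda>i. v i - c i) \<le> \<epsilon>)"
  \<comment> \<open>A maximal \<open>\<epsilon>\<close>-separated subset of \<open>A\<close> is an \<open>\<epsilon>\<close>-net.\<close>
proof -
  define separated where "separated T \<longleftrightarrow> finite T \<and> T \<subseteq> A \<and>
      (\<forall>s\<in>T. \<forall>t\<in>T. s \<noteq> t \<longrightarrow> \<epsilon> < N (\<lambda>i. s i - t i))" for T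
  have card_le: "real (card T) \<le> (1 + 2 * R / \<epsilon>) ^ n" if "separated T" for T
    using that A unfolding separated_def by (intro card_separated_le[OF eps R]) auto
  define cards where "cards = {card T | T. separated T}"
  have "card T \<le> nat \<lceil>(1 + 2 * R / \<epsilon>) ^ n\<rceil>" if "separated T" for T
    using card_le[OF that] by linarith
  then have "cards \<subseteq> {..nat \<lceil>(1 + 2 * R / \<epsilon>) ^ n\<rceil>}"
    by (auto simp: cards_def)
  moreover have "separated {}"
    by (simp add: separated_def)
  then have "card {} \<in> cards"
    unfolding cards_def by (intro CollectI exI[of _ "{}"]) simp
  ultimately have fin: "finite cards" and "Max cards \<in> cards"
    by (auto intro: Max_in finite_subset)
  then obtain T where T: "separated T" "card T = Max cards"
    by (auto simp: cards_def)
  have "\<exists>c\<in>T. N (\<lambda>i. v i - c i) \<le> \<epsilon>" if v: "v \<in> A" for v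
  proof (rule ccontr)
    assume "\<not> ?thesis"
    then have far: "\<forall>c\<in>T. \<epsilon> < N (\<lambda>i. v i - c i) \<and> \<epsilon> < N (\<lambda>i. c i - v i)"
      using minus_commute[of v] by (simp add: not_le)
    then have "v \<notin> T" using eps zero by force
    have "separated (insert v T)"
      using T(1) far v by (auto simp: separated_def)
    then have "card (insert v T) \<in> cards"
      unfolding cards_def by blast
    then have "card (insert v T) \<le> Max cards"
      using fin by simp
    then show False
      using T \<open>v \<notin> T\<close> by (simp add: separated_def)
  qed
  moreover have "finite T" "T \<subseteq> A"
    using T(1) by (auto simp: separated_def)
  ultimately show ?thesis
    using card_le[OF T(1)] by blast
qed

lemma finite_cover_scaled:
  assumes eta: "0 < \<eta>" and Lc: "0 \<le> Lc" and R: "0 \<le> R" and A: "\<forall>v\<in>A. N v \<le> R"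
  shows "\<exists>C. finite C \<and> C \<subseteq> A \<and> real (card C) \<le> (1 + 2 * Lc * R / \<eta>) ^ n \<and>
             (\<forall>v\<in>A. \<exists>c\<in>C. Lc * N (\<lambda>i. v i - c i) \<le> \<eta>)"
proof (cases "Lc = 0")
  case True
  define C where "C = (if A = {} then {} else {SOME a. a \<in> A})"
  show ?thesis
  proof (intro exI[of _ C] conjI)
    show "finite C" "C \<subseteq> A" "real (card C) \<le> (1 + 2 * Lc * R / \<eta>) ^ n"
      using True by (auto simp: C_def some_in_eq)
    show "\<forall>v\<in>A. \<exists>c\<in>C. Lc * N (\<lambda>i. v i - c i) \<le> \<eta>"
      using True eta by (auto simp: C_def)
  qed
next
  case False
  then have Lc: "0 < Lc" using Lc by simp
  then obtain C where C: "finite C" "C \<subseteq> A" "real (card C) \<le> (1 + 2 * R / (\<eta> / Lc)) ^ n"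
      "\<forall>v\<in>A. \<exists>c\<in>C. N (\<lambda>i. v i - c i) \<le> \<eta> / Lc"
    using finite_cover[of "\<eta> / Lc" R A] eta R A by auto
  have "2 * R / (\<eta> / Lc) = 2 * Lc * R / \<eta>"
    by simp
  show ?thesis
  proof (intro exI[of _ C] conjI)
    show "finite C" "C \<subseteq> A" using C by auto
    show "real (card C) \<le> (1 + 2 * Lc * R / \<eta>) ^ n"
      using C(3) unfolding \<open>2 * R / (\<eta> / Lc) = _\<close> .
    show "\<forall>v\<in>A. \<exists>c\<in>C. Lc * N (\<lambda>i. v i - c i) \<le> \<eta>"
      using C(4) Lc by (simp add: pos_le_divide_eq mult.commute)
  qed
qed

end

lemma lq_norm_coordinate_norm:
  assumes q: "1 \<le> q"
  shows "coordinate_norm n (lq_norm q n)"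
proof
  show "lq_norm q n x = lq_norm q n y" if "\<And>i. i < n \<Longrightarrow> x i = y i" for x y
    using that by (rule lq_norm_cong)
  show "lq_norm q n (\<lambda>i. c * x i) = \<bar>c\<bar> * lq_norm q n x" for c x
    using q by (rule lq_norm_scale)
  show "lq_norm q n (\<lambda>i. x i + y i) \<le> lq_norm q n x + lq_norm q n y" for x y
    using q by (rule lq_norm_triangle)
  show "\<bar>x i\<bar> \<le> lq_norm q n x" if "i < n" for x i
    using q that by (rule abs_le_lq_norm)
  show "lq_norm q n x \<le> 1" if "\<And>i. i < n \<Longrightarrow> \<bar>x i\<bar> \<le> 1 / real n" for x
    using q that by (rule lq_norm_le_one)
  show "lq_norm q n \<in> borel_measurable (lborel_vec n)"
    by (rule lq_norm_measurable)
qed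

lemma norm2_coordinate_norm: "coordinate_norm n (norm2 n)"
proof -
  have "norm2 n = lq_norm 2 n" by (rule ext) (rule norm2_eq_lq_norm)
  then show ?thesis using lq_norm_coordinate_norm[of 2 n] by simp
qed

lemma zero_in_lq_ball: "1 \<le> q \<Longrightarrow> (\<lambda>_. 0) \<in> lq_ball q K"
  using coordinate_norm.zero[OF lq_norm_coordinate_norm] by (simp add: lq_ball_def is_vec_def)

lemma linear_differential_inequality:
  fixes g g' :: "real \<Rightarrow> real"
  assumes c: "0 < c" and x: "a0 \<le> x"
    and deriv: "\<And>y. y \<in> {a0..x} \<Longrightarrow> (g has_real_derivative g' y) (at y within {a0..x})"
    and bound: "\<And>y. y \<in> {a0..x} \<Longrightarrow> g' y \<le> c * g y + D"
  shows "g x \<le> (g a0 + D / c) * exp (c * (x - a0)) - D / c"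
proof -
  define h where "h y = (g y + D / c) * exp (- c * (y - a0))" for y
  define h' where "h' y = (g' y - c * g y - D) * exp (- c * (y - a0))" for y
  have "(h has_real_derivative h' y) (at y within {a0..x})" if "y \<in> {a0..x}" for y
    unfolding h_def h'_def using c
    by (auto intro!: derivative_eq_intros deriv[OF that] simp: field_simps)
  then obtain z where z: "z \<in> {a0..x}" "h x - h a0 = h' z * (x - a0)"
    using mvt_very_simple[OF x, of h "\<lambda>y. (*) (h' y)"] by (auto simp: has_field_derivative_def)
  have "h' z * (x - a0) \<le> 0"
    using bound[OF z(1)] x by (simp add: h'_def mult_nonpos_nonneg)
  then have "h x \<le> h a0"
    using z by linarith
  then have "(g x + D / c) * exp (- c * (x - a0)) * exp (c * (x - a0))
               \<le> (g a0 + D / c) * exp (c * (x - a0))"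
    by (simp add: h_def)
  then show ?thesis
    by (simp add: mult.assoc flip: exp_add)
qed

lemma sqrt_differential_inequality:
  fixes w w' :: "real \<Rightarrow> real"
  assumes c: "0 < c" and D: "0 \<le> D" and x: "a0 \<le> x"
    and w: "\<And>y. y \<in> {a0..x} \<Longrightarrow> 0 \<le> w y"
    and dw: "\<And>y. y \<in> {a0..x} \<Longrightarrow> (w has_real_derivative w' y) (at y within {a0..x})"
    and w': "\<And>y. y \<in> {a0..x} \<Longrightarrow> w' y \<le> 2 * sqrt (w y) * (c * sqrt (w y) + D)"
  shows "sqrt (w x) \<le> (sqrt (w a0) + D / c) * exp (c * (x - a0)) - D / c"
proof -
  \<comment> \<open>\<open>sqrt\<close> is not differentiable at 0, so compare \<open>sqrt (w + \<eta>\<^sup>2)\<close> instead and let \<open>\<eta> \<rightarrow> 0\<close>.\<close>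
  have approx: "sqrt (w x)
      \<le> (sqrt (w a0) + D / c) * exp (c * (x - a0)) - D / c + \<eta> * exp (c * (x - a0))"
    if eta: "0 < \<eta>" for \<eta>
  proof -
    define v where "v y = sqrt (w y + \<eta>\<^sup>2)" for y
    have v: "0 < v y" "sqrt (w y) \<le> v y" if "y \<in> {a0..x}" for y
      using w[OF that] eta by (simp_all add: v_def add_nonneg_pos)
    have dv: "(v has_real_derivative w' y / (2 * v y)) (at y within {a0..x})" if "y \<in> {a0..x}" for y
      unfolding v_def using v(1)[OF that]
      by (auto intro!: derivative_eq_intros dw[OF that] simp: v_def divide_simps)
    have "w' y / (2 * v y) \<le> c * v y + D" if "y \<in> {a0..x}" for y
    proof -
      have "2 * sqrt (w y) * (c * sqrt (w y) + D) \<le> 2 * v y * (c * v y + D)"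
        using v[OF that] w[OF that] c D by (intro mult_mono) (auto intro: mult_left_mono)
      then have "w' y \<le> 2 * v y * (c * v y + D)"
        using w'[OF that] by linarith
      then show ?thesis using v(1)[OF that] by (simp add: field_simps)
    qed
    from linear_differential_inequality[OF c x dv this]
    have "v x \<le> (v a0 + D / c) * exp (c * (x - a0)) - D / c" .
    moreover have "w a0 + \<eta>\<^sup>2 \<le> (sqrt (w a0) + \<eta>)\<^sup>2"
      using w[of a0] x eta by (simp add: power2_sum)
    then have "v a0 \<le> sqrt (w a0) + \<eta>"
      unfolding v_def using eta w[of a0] x by (intro real_le_lsqrt) auto
    then have "(v a0 + D / c) * exp (c * (x - a0)) \<le> (sqrt (w a0) + \<eta> + D / c) * exp (c * (x - a0))"
      by (simp add: mult_right_mono)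
    ultimately show ?thesis
      using v(2)[of x] x by (simp add: algebra_simps)
  qed
  show ?thesis
  proof (rule field_le_epsilon)
    fix e :: real assume "0 < e"
    then show "sqrt (w x) \<le> (sqrt (w a0) + D / c) * exp (c * (x - a0)) - D / c + e"
      using approx[of "e / exp (c * (x - a0))"] by simp
  qed
qed

lemma norm2_differential_inequality:
  fixes E E' :: "nat \<Rightarrow> real \<Rightarrow> real"
  assumes c: "0 < c" and D: "0 \<le> D" and x: "a0 \<le> x"
    and deriv: "\<And>y j. y \<in> {a0..x} \<Longrightarrow> j < m \<Longrightarrow> (E j has_real_derivative E' j y) (at y within {a0..x})"
    and bound: "\<And>y. y \<in> {a0..x} \<Longrightarrow> norm2 m (\<lambda>j. E' j y) \<le> c * norm2 m (\<lambda>j. E j y) + D"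
  shows "norm2 m (\<lambda>j. E j x) \<le> (norm2 m (\<lambda>j. E j a0) + D / c) * exp (c * (x - a0)) - D / c"
proof -
  define w where "w y = (\<Sum>j<m. (E j y)\<^sup>2)" for y
  define w' where "w' y = (\<Sum>j<m. 2 * E j y * E' j y)" for y
  have w: "0 \<le> w y" "norm2 m (\<lambda>j. E j y) = sqrt (w y)" for y
    by (simp_all add: w_def norm2_def sum_nonneg)
  have "sqrt (w x) \<le> (sqrt (w a0) + D / c) * exp (c * (x - a0)) - D / c"
  proof (rule sqrt_differential_inequality[OF c D x w(1)])
    show "(w has_real_derivative w' y) (at y within {a0..x})" if "y \<in> {a0..x}" for y
      unfolding w_def w'_def by (auto intro!: derivative_eq_intros DERIV_sum deriv that)
    show "w' y \<le> 2 * sqrt (w y) * (c * sqrt (w y) + D)" if "y \<in> {a0..x}" for y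
    proof -
      have "w' y \<le> 2 * (\<Sum>j<m. \<bar>E j y\<bar> * \<bar>E' j y\<bar>)"
        unfolding w'_def sum_distrib_left by (intro sum_mono) (auto simp flip: abs_mult)
      also have "\<dots> \<le> 2 * (norm2 m (\<lambda>j. E j y) * norm2 m (\<lambda>j. E' j y))"
        using L2_set_mult_ineq[of "\<lambda>j. E j y" "\<lambda>j. E' j y" "{..<m}"]
        by (simp add: norm2_def L2_set_def)
      also have "\<dots> \<le> 2 * sqrt (w y) * (c * sqrt (w y) + D)"
        using bound[OF that] w[of y] by (simp add: mult_left_mono)
      finally show ?thesis .
    qed
  qed
  then show ?thesis by (simp add: w(2))
qed

lemma sqrt_add_square_le:
  fixes L D R w \<Delta> :: real
  assumes D: "0 \<le> D" and R: "0 \<le> R" "R \<le> w" and \<Delta>: "\<bar>\<Delta>\<bar> \<le> L * sqrt w + D"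
  shows "sqrt (R + \<Delta>\<^sup>2) \<le> sqrt (L\<^sup>2 + 1) * sqrt w + D"
proof (rule real_le_lsqrt)
  define s c where "s = sqrt w" and "c = sqrt (L\<^sup>2 + 1)"
  have s: "0 \<le> s" "s\<^sup>2 = w" and c: "L \<le> c" "c\<^sup>2 = L\<^sup>2 + 1"
    using R by (auto simp: s_def c_def real_le_rsqrt)
  have "\<Delta>\<^sup>2 \<le> (L * s + D)\<^sup>2"
    using power_mono[OF \<Delta> abs_ge_zero, of 2] by (simp add: s_def)
  moreover have "(c * s + D)\<^sup>2 - ((L * s + D)\<^sup>2 + s\<^sup>2) = 2 * s * D * (c - L)"
    using arg_cong[OF c(2), of "\<lambda>u. u * s\<^sup>2"] by (simp add: power2_eq_square algebra_simps)
  moreover have "0 \<le> 2 * s * D * (c - L)"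
    using s c D by simp
  ultimately show "R + \<Delta>\<^sup>2 \<le> (sqrt (L\<^sup>2 + 1) * sqrt w + D)\<^sup>2"
    using R s unfolding s_def[symmetric] c_def[symmetric] by linarith
qed (use D R in \<open>auto intro!: add_nonneg_nonneg\<close>)

(* (e 1, ..., e (m - 1), Delta) is the derivative of the error vector e of the first-order system. *)
lemma norm2_companion_le:
  assumes m: "1 \<le> m" and D: "0 \<le> D" and \<Delta>: "\<bar>\<Delta>\<bar> \<le> L * norm2 m e + D"
  shows "norm2 m (\<lambda>j. if Suc j < m then e (Suc j) else \<Delta>) \<le> sqrt (L\<^sup>2 + 1) * norm2 m e + D"
proof -
  obtain k where k: "m = Suc k" using m by (cases m) auto
  have "(\<Sum>j<m. (e j)\<^sup>2) = (e 0)\<^sup>2 + (\<Sum>j<k. (e (Suc j))\<^sup>2)"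
    unfolding k by (rule sum.lessThan_Suc_shift)
  then have "sqrt ((\<Sum>j<k. (e (Suc j))\<^sup>2) + \<Delta>\<^sup>2) \<le> sqrt (L\<^sup>2 + 1) * sqrt (\<Sum>j<m. (e j)\<^sup>2) + D"
    using D \<Delta> by (intro sqrt_add_square_le) (auto simp: norm2_def sum_nonneg)
  then show ?thesis
    by (simp add: norm2_def k)
qed

lemma is_solutionE:
  assumes "is_solution m f G \<theta> Y0 a0 \<alpha> y"
  obtains Ys where "\<forall>t\<in>{a0..a0 + \<alpha>}. Ys 0 t = y t"
    "\<forall>t\<in>{a0..a0 + \<alpha>}. \<forall>j. Suc j < m \<longrightarrow>
       (Ys j has_real_derivative Ys (Suc j) t) (at t within {a0..a0 + \<alpha>})"
    "\<forall>t\<in>{a0..a0 + \<alpha>}. (Ys (m - 1) has_real_derivative f t (\<lambda>j. if j < m then Ys j t else 0) \<theta>)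
       (at t within {a0..a0 + \<alpha>})"
    "(\<lambda>j. if j < m then Ys j a0 else 0) = Y0"
    "\<forall>t\<in>{a0..a0 + \<alpha>}. (t, \<lambda>j. if j < m then Ys j t else 0) \<in> G"
  using assms unfolding is_solution_def Let_def by blast

(* exp (c t) * (1 + integral from 0 to t of exp (- c s)) in closed form: the growth factor of the
   Gronwall bound, and the function whose supremum is Lmax. *)
definition stability_factor :: "real \<Rightarrow> real \<Rightarrow> real" where
  "stability_factor c t = exp (c * t) * (1 + 1 / c) - 1 / c"

lemma gronwall_bound_le_stability_factor:
  assumes c: "0 < c" and t: "0 \<le> t" and e: "0 \<le> e" "e \<le> \<eta>" and D: "0 \<le> D" "D \<le> \<eta>"
  shows "(e + D / c) * exp (c * t) - D / c \<le> \<eta> * stability_factor c t"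
proof -
  have "(e + D / c) * exp (c * t) - D / c = e * exp (c * t) + D * ((exp (c * t) - 1) / c)"
    by (simp add: algebra_simps diff_divide_distrib)
  also have "\<dots> \<le> \<eta> * exp (c * t) + \<eta> * ((exp (c * t) - 1) / c)"
    using c t e D by (intro add_mono mult_right_mono) auto
  also have "\<dots> = \<eta> * stability_factor c t"
    by (simp add: stability_factor_def algebra_simps diff_divide_distrib)
  finally show ?thesis .
qed

lemma solution_difference_system:
  fixes f :: "real \<Rightarrow> (nat \<Rightarrow> real) \<Rightarrow> (nat \<Rightarrow> real) \<Rightarrow> real"
  assumes m: "1 \<le> m" and D: "0 \<le> D"
    and lipY: "\<forall>t Y Y'. (t, Y) \<in> G \<longrightarrow> (t, Y') \<in> G \<longrightarrow>
                 \<bar>f t Y \<theta> - f t Y' \<theta>\<bar> \<le> L * norm2 m (\<lambda>i. Y i - Y' i)"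
    and lipT: "\<forall>(t, Y)\<in>G. \<bar>f t Y \<theta> - f t Y \<theta>'\<bar> \<le> D"
    and sol: "is_solution m f G \<theta> Y0 a0 \<alpha> y" "is_solution m f G \<theta>' Y0' a0 \<alpha> y'"
  defines "I \<equiv> {a0..a0 + \<alpha>}"
  obtains E E' :: "nat \<Rightarrow> real \<Rightarrow> real"
  where "\<And>t j. t \<in> I \<Longrightarrow> j < m \<Longrightarrow> (E j has_real_derivative E' j t) (at t within I)"
    and "\<And>t. t \<in> I \<Longrightarrow> norm2 m (\<lambda>j. E' j t) \<le> sqrt (L\<^sup>2 + 1) * norm2 m (\<lambda>j. E j t) + D"
    and "\<And>t. t \<in> I \<Longrightarrow> E 0 t = y t - y' t"
    and "norm2 m (\<lambda>j. E j a0) = norm2 m (\<lambda>i. Y0 i - Y0' i)"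
proof -
  obtain Ys where Ys: "\<forall>t\<in>I. Ys 0 t = y t"
      "\<forall>t\<in>I. \<forall>j. Suc j < m \<longrightarrow> (Ys j has_real_derivative Ys (Suc j) t) (at t within I)"
      "\<forall>t\<in>I. (Ys (m - 1) has_real_derivative f t (\<lambda>j. if j < m then Ys j t else 0) \<theta>) (at t within I)"
      "(\<lambda>j. if j < m then Ys j a0 else 0) = Y0"
      "\<forall>t\<in>I. (t, \<lambda>j. if j < m then Ys j t else 0) \<in> G"
    by (rule is_solutionE[OF sol(1), folded I_def])
  obtain Zs where Zs: "\<forall>t\<in>I. Zs 0 t = y' t"
      "\<forall>t\<in>I. \<forall>j. Suc j < m \<longrightarrow> (Zs j has_real_derivative Zs (Suc j) t) (at t within I)"
      "\<forall>t\<in>I. (Zs (m - 1) has_real_derivative f t (\<lambda>j. if j < m then Zs j t else 0) \<theta>') (at t within I)"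
      "(\<lambda>j. if j < m then Zs j a0 else 0) = Y0'"
      "\<forall>t\<in>I. (t, \<lambda>j. if j < m then Zs j t else 0) \<in> G"
    by (rule is_solutionE[OF sol(2), folded I_def])
  define St St' where "St t = (\<lambda>j. if j < m then Ys j t else 0)"
    and "St' t = (\<lambda>j. if j < m then Zs j t else 0)" for t
  define E where "E j t = Ys j t - Zs j t" for j t
  define \<Delta> where "\<Delta> t = f t (St t) \<theta> - f t (St' t) \<theta>'" for t
  define E' where "E' j t = (if Suc j < m then E (Suc j) t else \<Delta> t)" for j t
  show thesis
  proof (rule that[of E E'])
    show "(E j has_real_derivative E' j t) (at t within I)" if "t \<in> I" "j < m" for t j
    proof (cases "Suc j < m")
      case True
      then show ?thesis using Ys(2) Zs(2) that
        unfolding E_def[abs_def] E'_def by (auto intro!: derivative_eq_intros)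
    next
      case False
      then have "j = m - 1" using that(2) by simp
      then show ?thesis using Ys(3) Zs(3) that False
        unfolding E_def[abs_def] E'_def \<Delta>_def St_def St'_def by (auto intro!: derivative_eq_intros)
    qed
    show "norm2 m (\<lambda>j. E' j t) \<le> sqrt (L\<^sup>2 + 1) * norm2 m (\<lambda>j. E j t) + D" if "t \<in> I" for t
    proof -
      have "norm2 m (\<lambda>i. St t i - St' t i) = norm2 m (\<lambda>j. E j t)"
        by (simp add: norm2_def St_def St'_def E_def)
      moreover have "\<bar>\<Delta> t\<bar> \<le> \<bar>f t (St t) \<theta> - f t (St' t) \<theta>\<bar> + \<bar>f t (St' t) \<theta> - f t (St' t) \<theta>'\<bar>"
        by (simp add: \<Delta>_def)
      ultimately have "\<bar>\<Delta> t\<bar> \<le> L * norm2 m (\<lambda>j. E j t) + D"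
        using lipY lipT Ys(5) Zs(5) that by (force simp: St_def St'_def)
      from norm2_companion_le[OF m D this] show ?thesis
        unfolding E'_def .
    qed
    show "E 0 t = y t - y' t" if "t \<in> I" for t
      using Ys(1) Zs(1) that by (simp add: E_def)
    show "norm2 m (\<lambda>j. E j a0) = norm2 m (\<lambda>i. Y0 i - Y0' i)"
      using Ys(4) Zs(4) by (auto simp: norm2_def E_def)
  qed
qed

lemma solution_stability:
  fixes f :: "real \<Rightarrow> (nat \<Rightarrow> real) \<Rightarrow> (nat \<Rightarrow> real) \<Rightarrow> real"
  assumes m: "1 \<le> m" and D: "0 \<le> D" "D \<le> \<eta>"
    and lipY: "\<forall>t Y Y'. (t, Y) \<in> G \<longrightarrow> (t, Y') \<in> G \<longrightarrow>
                 \<bar>f t Y \<theta> - f t Y' \<theta>\<bar> \<le> L * norm2 m (\<lambda>i. Y i - Y' i)"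
    and lipT: "\<forall>(t, Y)\<in>G. \<bar>f t Y \<theta> - f t Y \<theta>'\<bar> \<le> D"
    and Y0: "norm2 m (\<lambda>i. Y0 i - Y0' i) \<le> \<eta>"
    and sol: "is_solution m f G \<theta> Y0 a0 \<alpha> y" "is_solution m f G \<theta>' Y0' a0 \<alpha> y'"
    and x: "x \<in> {a0..a0 + \<alpha>}"
  shows "\<bar>y x - y' x\<bar> \<le> \<eta> * stability_factor (sqrt (L\<^sup>2 + 1)) (x - a0)"
proof -
  define c where "c = sqrt (L\<^sup>2 + 1)"
  have c: "0 < c" by (simp add: c_def add_nonneg_pos)
  obtain E E' where deriv: "\<And>t j. t \<in> {a0..a0 + \<alpha>} \<Longrightarrow> j < m \<Longrightarrow>
        (E j has_real_derivative E' j t) (at t within {a0..a0 + \<alpha>})"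
      and bound: "\<And>t. t \<in> {a0..a0 + \<alpha>} \<Longrightarrow> norm2 m (\<lambda>j. E' j t) \<le> c * norm2 m (\<lambda>j. E j t) + D"
      and E0: "\<And>t. t \<in> {a0..a0 + \<alpha>} \<Longrightarrow> E 0 t = y t - y' t"
      and Ea0: "norm2 m (\<lambda>j. E j a0) = norm2 m (\<lambda>i. Y0 i - Y0' i)"
    using solution_difference_system[OF m D(1) lipY lipT sol, folded c_def] by blast
  have "\<bar>y x - y' x\<bar> \<le> norm2 m (\<lambda>j. E j x)"
    using E0[OF x] m abs_le_lq_norm[of 2 0 m "\<lambda>j. E j x"] by (simp add: norm2_eq_lq_norm)
  also have "\<dots> \<le> (norm2 m (\<lambda>j. E j a0) + D / c) * exp (c * (x - a0)) - D / c"
  proof (rule norm2_differential_inequality[OF c D(1)])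
    show "(E j has_real_derivative E' j t) (at t within {a0..x})" if "t \<in> {a0..x}" "j < m" for t j
      using that x by (intro DERIV_subset[OF deriv]) auto
    show "norm2 m (\<lambda>j. E' j t) \<le> c * norm2 m (\<lambda>j. E j t) + D" if "t \<in> {a0..x}" for t
      using that x by (intro bound) auto
  qed (use x in simp)
  also have "\<dots> \<le> \<eta> * stability_factor c (x - a0)"
    using c x Y0[folded Ea0] D by (intro gronwall_bound_le_stability_factor) (auto simp: norm2_def sum_nonneg)
  finally show ?thesis by (simp add: c_def)
qed

lemma integral_exp_neg:
  fixes c x :: real
  assumes c: "0 < c" and x: "0 \<le> x"
  shows "integral {0..x} (\<lambda>s. exp (- s * c)) = (1 - exp (- x * c)) / c"
proof -
  have "((\<lambda>s. exp (- s * c)) has_integral (- exp (- x * c) / c - (- exp (- 0 * c) / c))) {0..x}"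
  proof (rule fundamental_theorem_of_calculus[OF x])
    fix s assume "s \<in> {0..x}"
    have "((\<lambda>s. - exp (- s * c) / c) has_real_derivative exp (- s * c)) (at s within {0..x})"
      using c by (auto intro!: derivative_eq_intros)
    then show "((\<lambda>s. - exp (- s * c) / c) has_vector_derivative exp (- s * c)) (at s within {0..x})"
      by (simp add: has_real_derivative_iff_has_vector_derivative)
  qed
  then show ?thesis by (simp add: integral_unique diff_divide_distrib)
qed

lemma stability_factor_mono: "0 < c \<Longrightarrow> s \<le> t \<Longrightarrow> stability_factor c s \<le> stability_factor c t"
  unfolding stability_factor_def by (intro diff_right_mono mult_right_mono) (auto simp: add_pos_pos)

lemma stability_factor_le_SUP:
  fixes c a0 \<alpha> t :: real
  assumes c: "0 < c" and a0: "0 \<le> a0" and t: "0 \<le> t" "t \<le> \<alpha>"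
  shows "stability_factor c t
           \<le> (SUP x\<in>{a0..a0 + \<alpha>}. exp (x * c) * (1 + integral {0..x} (\<lambda>s. exp (- s * c))))"
proof -
  have eq: "exp (x * c) * (1 + integral {0..x} (\<lambda>s. exp (- s * c))) = stability_factor c x"
    if "0 \<le> x" for x
  proof -
    have "exp (x * c) * exp (- x * c) = 1" by (simp flip: exp_add)
    then show ?thesis
      unfolding integral_exp_neg[OF c that] stability_factor_def using c
      by (simp add: field_simps mult.commute)
  qed
  have "stability_factor c t \<le> stability_factor c (a0 + t)"
    using a0 c by (intro stability_factor_mono) auto
  also have "\<dots> \<le> (SUP x\<in>{a0..a0 + \<alpha>}. stability_factor c x)"
    using t c
    by (intro cSUP_upper bdd_aboveI2[where M = "stability_factor c (a0 + \<alpha>)"] stability_factor_mono) auto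
  also have "\<dots> = (SUP x\<in>{a0..a0 + \<alpha>}. exp (x * c) * (1 + integral {0..x} (\<lambda>s. exp (- s * c))))"
    using a0 eq by (intro SUP_cong) auto
  finally show ?thesis .
qed

lemma parameter_nets:
  assumes q: "1 \<le> q" and C0: "0 \<le> C0" and LK: "0 \<le> LK" and eta: "0 < \<eta>"
  obtains C\<theta> CY where
    "finite C\<theta>" "C\<theta> \<subseteq> lq_ball q K" "real (card C\<theta>) \<le> (1 + 2 * LK / \<eta>) ^ K"
    "\<forall>\<theta>\<in>lq_ball q K. \<exists>c\<in>C\<theta>. LK * lq_norm q K (\<lambda>i. \<theta> i - c i) \<le> \<eta>"
  and "finite CY" "CY \<subseteq> {Y. is_vec m Y \<and> norm2 m Y \<le> C0}" "real (card CY) \<le> (1 + 2 * C0 / \<eta>) ^ m"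
    "\<forall>Y\<in>{Y. is_vec m Y \<and> norm2 m Y \<le> C0}. \<exists>c\<in>CY. norm2 m (\<lambda>i. Y i - c i) \<le> \<eta>"
proof -
  have "\<forall>\<theta>\<in>lq_ball q K. lq_norm q K \<theta> \<le> 1"
    by (simp add: lq_ball_def)
  from coordinate_norm.finite_cover_scaled[OF lq_norm_coordinate_norm[OF q] eta LK zero_le_one this]
  obtain C\<theta> where "finite C\<theta>" "C\<theta> \<subseteq> lq_ball q K" "real (card C\<theta>) \<le> (1 + 2 * LK * 1 / \<eta>) ^ K"
      "\<forall>\<theta>\<in>lq_ball q K. \<exists>c\<in>C\<theta>. LK * lq_norm q K (\<lambda>i. \<theta> i - c i) \<le> \<eta>"
    by blast
  moreover have "\<forall>Y\<in>{Y. is_vec m Y \<and> norm2 m Y \<le> C0}. norm2 m Y \<le> C0"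
    by simp
  from coordinate_norm.finite_cover_scaled[OF norm2_coordinate_norm eta zero_le_one C0 this]
  obtain CY where "finite CY" "CY \<subseteq> {Y. is_vec m Y \<and> norm2 m Y \<le> C0}"
      "real (card CY) \<le> (1 + 2 * 1 * C0 / \<eta>) ^ m"
      "\<forall>Y\<in>{Y. is_vec m Y \<and> norm2 m Y \<le> C0}. \<exists>c\<in>CY. 1 * norm2 m (\<lambda>i. Y i - c i) \<le> \<eta>"
    by blast
  ultimately show thesis
    using that by simp
qed

lemma solution_family_cover:
  fixes f :: "real \<Rightarrow> (nat \<Rightarrow> real) \<Rightarrow> (nat \<Rightarrow> real) \<Rightarrow> real"
  assumes m: "1 \<le> m" and q: "1 \<le> q" and C0: "0 \<le> C0" and LK: "0 \<le> LK" and \<delta>: "0 < \<delta>"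
    and \<Lambda>: "0 < \<Lambda>" "\<forall>t\<in>{0..\<alpha>}. stability_factor (sqrt (L\<^sup>2 + 1)) t \<le> \<Lambda>"
    and lipY: "\<forall>\<theta>\<in>lq_ball q K. \<forall>t Y Y'. (t, Y) \<in> G \<longrightarrow> (t, Y') \<in> G \<longrightarrow>
                 \<bar>f t Y \<theta> - f t Y' \<theta>\<bar> \<le> L * norm2 m (\<lambda>i. Y i - Y' i)"
    and lipT: "\<forall>\<theta>\<in>lq_ball q K. \<forall>\<theta>'\<in>lq_ball q K. \<forall>(t, Y)\<in>G.
                 \<bar>f t Y \<theta> - f t Y \<theta>'\<bar> \<le> LK * lq_norm q K (\<lambda>i. \<theta> i - \<theta>' i)"
    and ex: "\<forall>\<theta>\<in>lq_ball q K. \<forall>Y0. is_vec m Y0 \<and> norm2 m Y0 \<le> C0 \<longrightarrow>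
               (\<exists>y. is_solution m f G \<theta> Y0 a0 \<alpha> y)"
  defines "\<Y> \<equiv> {y. \<exists>\<theta>\<in>lq_ball q K. \<exists>Y0. is_vec m Y0 \<and> norm2 m Y0 \<le> C0 \<and>
                    is_solution m f G \<theta> Y0 a0 \<alpha> y}"
  shows "\<exists>C. finite C \<and> C \<subseteq> \<Y> \<and>
             real (card C) \<le> (1 + 2 * \<Lambda> * LK / \<delta>) ^ K * (2 * C0 * \<Lambda> / \<delta> + 1) ^ m \<and>
             (\<forall>y\<in>\<Y>. \<exists>z\<in>C. \<forall>x\<in>{a0..a0 + \<alpha>}. \<bar>y x - z x\<bar> \<le> \<delta>)"
proof -
  define \<eta> where "\<eta> = \<delta> / \<Lambda>"
  have eta: "0 < \<eta>" using \<delta> \<Lambda> by (simp add: \<eta>_def)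
  define B where "B = {Y. is_vec m Y \<and> norm2 m Y \<le> C0}"
  obtain C\<theta> CY where
      C\<theta>: "finite C\<theta>" "C\<theta> \<subseteq> lq_ball q K" "real (card C\<theta>) \<le> (1 + 2 * LK / \<eta>) ^ K"
        "\<forall>\<theta>\<in>lq_ball q K. \<exists>c\<in>C\<theta>. LK * lq_norm q K (\<lambda>i. \<theta> i - c i) \<le> \<eta>"
    and CY: "finite CY" "CY \<subseteq> B" "real (card CY) \<le> (1 + 2 * C0 / \<eta>) ^ m"
        "\<forall>Y\<in>B. \<exists>c\<in>CY. norm2 m (\<lambda>i. Y i - c i) \<le> \<eta>"
    unfolding B_def by (rule parameter_nets[OF q C0 LK eta])
  define sol where "sol \<theta> Y = (SOME y. is_solution m f G \<theta> Y a0 \<alpha> y)" for \<theta> Y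
  have sol: "is_solution m f G \<theta> Y a0 \<alpha> (sol \<theta> Y)" if "\<theta> \<in> lq_ball q K" "Y \<in> B" for \<theta> Y
  proof -
    have "\<exists>y. is_solution m f G \<theta> Y a0 \<alpha> y"
      using ex that unfolding B_def by blast
    then show ?thesis
      unfolding sol_def by (rule someI_ex)
  qed
  define C where "C = (\<lambda>(\<theta>, Y). sol \<theta> Y) ` (C\<theta> \<times> CY)"
  have "finite C" using C\<theta>(1) CY(1) by (simp add: C_def)
  moreover have "C \<subseteq> \<Y>"
  proof
    fix z assume "z \<in> C"
    then obtain \<theta> Y where "\<theta> \<in> C\<theta>" "Y \<in> CY" "z = sol \<theta> Y" by (auto simp: C_def)
    then show "z \<in> \<Y>"
      using C\<theta>(2) CY(2) sol[of \<theta> Y] unfolding \<Y>_def B_def by blast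
  qed
  moreover have "real (card C) \<le> (1 + 2 * \<Lambda> * LK / \<delta>) ^ K * (2 * C0 * \<Lambda> / \<delta> + 1) ^ m"
  proof -
    have "card C \<le> card C\<theta> * card CY"
      unfolding C_def using card_image_le[of "C\<theta> \<times> CY"] C\<theta>(1) CY(1)
      by (simp add: card_cartesian_product)
    then have "real (card C) \<le> real (card C\<theta>) * real (card CY)"
      by (simp flip: of_nat_mult)
    also have "\<dots> \<le> (1 + 2 * \<Lambda> * LK / \<delta>) ^ K * (2 * C0 * \<Lambda> / \<delta> + 1) ^ m"
      using C\<theta>(3) CY(3) by (intro mult_mono) (auto simp: \<eta>_def ac_simps)
    finally show ?thesis .
  qed
  moreover have "\<exists>z\<in>C. \<forall>x\<in>{a0..a0 + \<alpha>}. \<bar>y x - z x\<bar> \<le> \<delta>" if "y \<in> \<Y>" for y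
  proof -
    obtain \<theta> Y0 where \<theta>: "\<theta> \<in> lq_ball q K" and Y0: "Y0 \<in> B" and y: "is_solution m f G \<theta> Y0 a0 \<alpha> y"
      using \<open>y \<in> \<Y>\<close> unfolding \<Y>_def B_def by blast
    obtain \<theta>c where \<theta>c: "\<theta>c \<in> C\<theta>" "LK * lq_norm q K (\<lambda>i. \<theta> i - \<theta>c i) \<le> \<eta>"
      using C\<theta>(4) \<theta> by blast
    obtain Yc where Yc: "Yc \<in> CY" "norm2 m (\<lambda>i. Y0 i - Yc i) \<le> \<eta>"
      using CY(4) Y0 by auto
    have D: "0 \<le> LK * lq_norm q K (\<lambda>i. \<theta> i - \<theta>c i)"
      using LK lq_norm_nonneg by simp
    have \<theta>c_ball: "\<theta>c \<in> lq_ball q K" and Yc_ball: "Yc \<in> B"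
      using \<theta>c(1) Yc(1) C\<theta>(2) CY(2) by auto
    have "\<bar>y x - sol \<theta>c Yc x\<bar> \<le> \<delta>" if x: "x \<in> {a0..a0 + \<alpha>}" for x
    proof -
      have "\<bar>y x - sol \<theta>c Yc x\<bar> \<le> \<eta> * stability_factor (sqrt (L\<^sup>2 + 1)) (x - a0)"
        by (rule solution_stability[OF m D \<theta>c(2) bspec[OF lipY \<theta>] bspec[OF bspec[OF lipT \<theta>] \<theta>c_ball]
              Yc(2) y sol[OF \<theta>c_ball Yc_ball] x])
      also have "\<dots> \<le> \<eta> * \<Lambda>"
        using \<Lambda>(2) x eta by (intro mult_left_mono) auto
      finally show ?thesis using \<Lambda>(1) by (simp add: \<eta>_def)
    qed
    moreover have "sol \<theta>c Yc \<in> C"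
      using \<theta>c(1) Yc(1) by (auto simp: C_def)
    ultimately show ?thesis by blast
  qed
  ultimately show ?thesis by blast
qed

lemma solution_family_nonempty:
  assumes "1 \<le> q" "0 \<le> C0"
    and ex: "\<forall>\<theta>\<in>lq_ball q K. \<forall>Y0. is_vec m Y0 \<and> norm2 m Y0 \<le> C0 \<longrightarrow>
               (\<exists>y. is_solution m f G \<theta> Y0 a0 \<alpha> y)"
  shows "{y. \<exists>\<theta>\<in>lq_ball q K. \<exists>Y0. is_vec m Y0 \<and> norm2 m Y0 \<le> C0 \<and>
              is_solution m f G \<theta> Y0 a0 \<alpha> y} \<noteq> {}"
proof -
  have "is_vec m (\<lambda>_. 0)" "norm2 m (\<lambda>_. 0) \<le> C0"
    using assms(2) by (simp_all add: is_vec_def norm2_def)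
  moreover obtain y where "is_solution m f G (\<lambda>_. 0) (\<lambda>_. 0) a0 \<alpha> y"
    using ex zero_in_lq_ball[OF assms(1)] calculation by blast
  ultimately show ?thesis
    using zero_in_lq_ball[OF assms(1)] by blast
qed

lemma covering_number_le_card:
  assumes C: "finite C" "C \<subseteq> \<Y>" "\<forall>y\<in>\<Y>. \<exists>c\<in>C. \<forall>x\<in>I. \<bar>y x - c x\<bar> \<le> \<delta>" and ne: "\<Y> \<noteq> {}"
  shows "\<exists>k. covering_number \<delta> I \<Y> = enat k \<and> 1 \<le> k \<and> k \<le> card C"
proof -
  define S where
    "S = {enat (card C) | C. finite C \<and> C \<subseteq> \<Y> \<and> (\<forall>y\<in>\<Y>. \<exists>c\<in>C. \<forall>x\<in>I. \<bar>y x - c x\<bar> \<le> \<delta>)}"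
  have N: "covering_number \<delta> I \<Y> = Inf S"
    by (simp add: covering_number_def S_def)
  have "Inf S \<le> enat (card C)"
    using C by (intro Inf_lower) (auto simp: S_def)
  moreover have "1 \<le> Inf S"
  proof (rule Inf_greatest)
    fix k assume "k \<in> S"
    then obtain C' where C': "k = enat (card C')" "finite C'"
        "\<forall>y\<in>\<Y>. \<exists>c\<in>C'. \<forall>x\<in>I. \<bar>y x - c x\<bar> \<le> \<delta>"
      by (auto simp: S_def)
    moreover have "C' \<noteq> {}"
      using C'(3) ne by auto
    ultimately show "1 \<le> k" by (simp add: one_enat_def Suc_le_eq card_gt_0_iff)
  qed
  ultimately show ?thesis
    unfolding N by (cases "Inf S") (auto simp: one_enat_def)
qed

lemma ln_covering_number_le:
  fixes A B :: real
  assumes C: "finite C" "C \<subseteq> \<Y>" "\<forall>y\<in>\<Y>. \<exists>c\<in>C. \<forall>x\<in>I. \<bar>y x - c x\<bar> \<le> \<delta>" and ne: "\<Y> \<noteq> {}"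
    and card: "real (card C) \<le> A ^ K * B ^ m" and AB: "1 \<le> A" "1 \<le> B"
  shows "covering_number \<delta> I \<Y> \<noteq> \<infinity> \<and>
         ln (real (the_enat (covering_number \<delta> I \<Y>))) \<le> real K * ln A + real m * ln B"
proof -
  obtain k where k: "covering_number \<delta> I \<Y> = enat k" "1 \<le> k" "k \<le> card C"
    using covering_number_le_card[OF C ne] by blast
  have "ln (real k) \<le> ln (A ^ K * B ^ m)"
    using k card AB by (subst ln_le_cancel_iff) auto
  also have "\<dots> = real K * ln A + real m * ln B"
    using AB by (simp add: ln_mult ln_realpow)
  finally show ?thesis using k(1) by simp
qed

theorem corollary2p1:
  fixes m K :: nat and q :: ereal
    and a0 a b C0 M L LK :: real
    and f :: "real \<Rightarrow> (nat \<Rightarrow> real) \<Rightarrow> (nat \<Rightarrow> real) \<Rightarrow> real"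
  assumes "m \<ge> 1" "K \<ge> 1" "1 \<le> q"
    and "a0 \<ge> 0" "a > 0" "b > 0" "C0 > 0" "M > 0" "L \<ge> 0" "LK \<ge> 0"
    and cont: "\<forall>\<theta>\<in>lq_ball q K. cont_on_Gamma m (Gamma m a0 a b C0) (\<lambda>x Y. f x Y \<theta>)"
    and bnd: "\<forall>\<theta>\<in>lq_ball q K. \<forall>(x, Y)\<in>Gamma m a0 a b C0. \<bar>f x Y \<theta>\<bar> \<le> M"
    and lipY: "\<forall>\<theta>\<in>lq_ball q K. \<forall>x Y Y'. (x, Y) \<in> Gamma m a0 a b C0 \<longrightarrow> (x, Y') \<in> Gamma m a0 a b C0 \<longrightarrow>
                 \<bar>f x Y \<theta> - f x Y' \<theta>\<bar> \<le> L * norm2 m (\<lambda>i. Y i - Y' i)"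
    and lipT: "\<forall>\<theta>\<in>lq_ball q K. \<forall>\<theta>'\<in>lq_ball q K. \<forall>(x, Y)\<in>Gamma m a0 a b C0.
                 \<bar>f x Y \<theta> - f x Y \<theta>'\<bar> \<le> LK * lq_norm q K (\<lambda>i. \<theta> i - \<theta>' i)"
    and ex: "\<forall>\<theta>\<in>lq_ball q K. \<forall>Y0. is_vec m Y0 \<and> norm2 m Y0 \<le> C0 \<longrightarrow>
               (\<exists>y. is_solution m f (Gamma m a0 a b C0) \<theta> Y0 a0 (min a (b / M)) y)"
  shows "\<forall>\<delta>>0.
    (let \<alpha> = min a (b / M);
         \<Y> = {y. \<exists>\<theta>\<in>lq_ball q K. \<exists>Y0. is_vec m Y0 \<and> norm2 m Y0 \<le> C0 \<and>
                 is_solution m f (Gamma m a0 a b C0) \<theta> Y0 a0 \<alpha> y};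
         Lmax = (SUP x\<in>{a0..a0 + \<alpha>}. exp (x * sqrt (L\<^sup>2 + 1)) *
                    (1 + integral {0..x} (\<lambda>s. exp (- s * sqrt (L\<^sup>2 + 1)))));
         N = covering_number \<delta> {a0..a0 + \<alpha>} \<Y>
     in N \<noteq> \<infinity> \<and>
        ln (real (the_enat N)) \<le> real K * ln (1 + 2 * Lmax * LK / \<delta>) + real m * ln (2 * C0 * Lmax / \<delta> + 1))"
proof (intro allI impI, goal_cases)
  case (1 \<delta>)
  define \<alpha> where "\<alpha> = min a (b / M)"
  define c where "c = sqrt (L\<^sup>2 + 1)"
  define \<Y> where "\<Y> = {y. \<exists>\<theta>\<in>lq_ball q K. \<exists>Y0. is_vec m Y0 \<and> norm2 m Y0 \<le> C0 \<and>
                          is_solution m f (Gamma m a0 a b C0) \<theta> Y0 a0 \<alpha> y}"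
  define Lmax where
    "Lmax = (SUP x\<in>{a0..a0 + \<alpha>}. exp (x * c) * (1 + integral {0..x} (\<lambda>s. exp (- s * c))))"
  have growth: "\<forall>t\<in>{0..\<alpha>}. stability_factor c t \<le> Lmax"
    using stability_factor_le_SUP[of c a0] assms(4) by (simp add: c_def add_nonneg_pos Lmax_def)
  moreover have "0 \<le> \<alpha>"
    using assms(5-8) by (simp add: \<alpha>_def)
  ultimately have Lmax: "1 \<le> Lmax"
    by (force simp: stability_factor_def)
  note cover = solution_family_cover[OF assms(1,3) less_imp_le[OF assms(7)] assms(10) 1 _
      growth[unfolded c_def] lipY lipT ex[folded \<alpha>_def], folded \<Y>_def]
  from cover Lmax obtain C where C: "finite C" "C \<subseteq> \<Y>"
      "real (card C) \<le> (1 + 2 * Lmax * LK / \<delta>) ^ K * (2 * C0 * Lmax / \<delta> + 1) ^ m"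
      "\<forall>y\<in>\<Y>. \<exists>z\<in>C. \<forall>x\<in>{a0..a0 + \<alpha>}. \<bar>y x - z x\<bar> \<le> \<delta>"
    by auto
  have "\<Y> \<noteq> {}"
    unfolding \<Y>_def
    by (rule solution_family_nonempty[OF assms(3) less_imp_le[OF assms(7)] ex[folded \<alpha>_def]])
  then show ?case
    unfolding Let_def \<alpha>_def[symmetric] c_def[symmetric] \<Y>_def[symmetric] Lmax_def[symmetric]
    using 1 assms(7,10) Lmax by (intro ln_covering_number_le[OF C(1,2,4) _ C(3)]) auto
qed

end
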